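(* In the construction described in the context, for every $k\in\{1,\dots,t-1\}$ and every set $\mathcal{A}\subseteq\{1,\dots,t-1\}$ of indices with $|\mathcal{A}|=k$, there exist at least $k$ distinct edges of $F\cap T$ each of which crosses at least one of the complete cuts $C_G(X_i)$, $i\in\mathcal{A}$.
   Context: Setting: $G=(V,E)$ is a connected finite undirected graph (parallel edges allowed), $w:E\to\mathbb{R}_{\ge0}$ edge weights, $c:E\to\mathbb{R}_{>0}$ edge costs, $n=|V|$. For $S\subseteq V$, $C_G(S)=\{e\in E:|e\cap S|=1\}$ (complete cut; its edges cross it) and $C_G(S,W)=\{e\in C_G(S):w(e)<W\}$ (partial cut). $F\subseteq E$ is a set with $G'=G\setminus F=(V,E\setminus F)$ connected; $B=c(F)$ and $\Delta=\mathrm{MST}(G')-\mathrm{MST}(G)$ (MST weights w.r.t. $w$). Construction: let $T$ be a minimum spanning tree of $G$ and $T\cap F=\{e_1,\dots,e_{t-1}\}$, with $t\ge2$. Removing these edges splits $T$ into components with vertex sets $A_1,\dots,A_t$ (a partition of $V$). Let $G'_{cc}$ be the multigraph with vertex set $V_{cc}=\{A_1,\dots,A_t\}$ having, for every edge $\{u,v\}\in E\setminus F$ with $u\in A_i$, $v\in A_j$, an edge between $A_i$ and $A_j$ of weight $w(\{u,v\})$ (identified with the original edge). Let $T'_{cc}$ be a minimum spanning tree of $G'_{cc}$, with edges $e'_1,\dots,e'_{t-1}$ indexed so that $w(e'_1)\le\dots\le w(e'_{t-1})$ (ties broken arbitrarily). For each $i$, deleting $e'_i,e'_{i+1},\dots,e'_{t-1}$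 from $T'_{cc}$ leaves a forest in which $e'_i$ joins two components $L_i,R_i\subseteq V_{cc}$. Counters $k(A)=0$ for all $A\in V_{cc}$ initially, and $k(S)=\max_{A\in S}k(A)$. For $i=1,\dots,t-1$ in order: set $X_i=L_i$ if $k(L_i)\le k(R_i)$, else $X_i=R_i$; then increase $k(A)$ by $1$ for every $A\in X_i$. Identifying a set of vertices of $G'_{cc}$ with the union of the corresponding vertex sets in $V$, define $C_i=C_G(X_i,w(e'_i))$. *)

theory Defs
  imports Complex_Main
begin

text \<open>Multigraphs: a vertex set and a set of edge identifiers with an endpoint map
  (each edge of G has exactly two endpoints; parallel edges allowed).\<close>

definition adj :: "('e \<Rightarrow> 'v set) \<Rightarrow> 'e set \<Rightarrow> ('v \<times> 'v) set" where
  "adj ends Es = {(u, v). \<exists>e\<in>Es. ends e = {u, v}}"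

definition connected_graph :: "'v set \<Rightarrow> ('e \<Rightarrow> 'v set) \<Rightarrow> 'e set \<Rightarrow> bool" where
  "connected_graph Vs ends Es \<longleftrightarrow> (\<forall>x\<in>Vs. \<forall>y\<in>Vs. (x, y) \<in> (adj ends Es)\<^sup>*)"

definition comp_of :: "'v set \<Rightarrow> ('e \<Rightarrow> 'v set) \<Rightarrow> 'e set \<Rightarrow> 'v \<Rightarrow> 'v set" where
  "comp_of Vs ends Es x = {y\<in>Vs. (x, y) \<in> (adj ends Es)\<^sup>*}"

definition spanning_tree :: "'v set \<Rightarrow> ('e \<Rightarrow> 'v set) \<Rightarrow> 'e set \<Rightarrow> 'e set \<Rightarrow> bool" where
  "spanning_tree Vs ends Es T \<longleftrightarrow> T \<subseteq> Es \<and> connected_graph Vs ends T \<and>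
     (\<forall>T'. T' \<subset> T \<longrightarrow> \<not> connected_graph Vs ends T')"

definition is_MST :: "'v set \<Rightarrow> ('e \<Rightarrow> 'v set) \<Rightarrow> 'e set \<Rightarrow> ('e \<Rightarrow> real) \<Rightarrow> 'e set \<Rightarrow> bool" where
  "is_MST Vs ends Es w T \<longleftrightarrow> spanning_tree Vs ends Es T \<and>
     (\<forall>T'. spanning_tree Vs ends Es T' \<longrightarrow> sum w T \<le> sum w T')"

definition crosses :: "('e \<Rightarrow> 'v set) \<Rightarrow> 'v set \<Rightarrow> 'e \<Rightarrow> bool" where
  "crosses ends S e \<longleftrightarrow> card (ends e \<inter> S) = 1"

definition kmax :: "('a \<Rightarrow> nat) \<Rightarrow> 'a set \<Rightarrow> nat" where
  "kmax k S = Max (k ` S)"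

text \<open>Counters after steps 1..i of the process; step i+1 selects X_(i+1) from L, R.\<close>
primrec kcnt :: "(nat \<Rightarrow> 'a set) \<Rightarrow> (nat \<Rightarrow> 'a set) \<Rightarrow> nat \<Rightarrow> 'a \<Rightarrow> nat" where
  "kcnt L R 0 A = 0"
| "kcnt L R (Suc i) A = kcnt L R i A +
     (if A \<in> (if kmax (kcnt L R i) (L (Suc i)) \<le> kmax (kcnt L R i) (R (Suc i))
              then L (Suc i) else R (Suc i)) then 1 else 0)"

text \<open>X_i for i \<ge> 1, chosen with the counters after steps 1..i-1.\<close>
definition Xsel :: "(nat \<Rightarrow> 'a set) \<Rightarrow> (nat \<Rightarrow> 'a set) \<Rightarrow> nat \<Rightarrow> 'a set" where
  "Xsel L R i = (if kmax (kcnt L R (i - 1)) (L i) \<le> kmax (kcnt L R (i - 1)) (R i)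
                 then L i else R i)"

end

theory Submission
  imports Defs
begin

(* Label each component C of T - F by the set of indices i in A with C in X_i.  Each X_i is
   the component, in the forest of the earlier edges e'_1, ..., e'_(i-1), of one endpoint of
   e'_i, and every component of such a forest contains a vertex lying in none of the earlier
   X_j.  Hence for m = max A some component is labelled {m} and another one is unlabelled,
   and induction on A yields at least |A| + 1 distinct labels.  Pulled back to V the labels are
   constant along T - F, so the spanning tree T has at least |A| edges with differently
   labelled endpoints; each of them lies in F and crosses some X_i. *)

lemma sym_adj: "sym (adj f Es)"
  by (auto simp: adj_def insert_commute intro: symI)

lemma rtrancl_adj_sym: "(x, y) \<in> (adj f Es)\<^sup>* \<Longrightarrow> (y, x) \<in> (adj f Es)\<^sup>*"
  by (meson sym_adj sym_rtrancl symD)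

lemma adj_mono: "Es \<subseteq> Es' \<Longrightarrow> adj f Es \<subseteq> adj f Es'"
  by (auto simp: adj_def)

lemma rtrancl_adj_mono: "Es \<subseteq> Es' \<Longrightarrow> (x, y) \<in> (adj f Es)\<^sup>* \<Longrightarrow> (x, y) \<in> (adj f Es')\<^sup>*"
  using rtrancl_mono[OF adj_mono] by blast

lemma edge_in_rtrancl_adj: "e \<in> Es \<Longrightarrow> f e = {u, v} \<Longrightarrow> (u, v) \<in> (adj f Es)\<^sup>*"
  by (auto simp: adj_def)

lemma mem_comp_of: "y \<in> comp_of Vs f Es x \<longleftrightarrow> y \<in> Vs \<and> (x, y) \<in> (adj f Es)\<^sup>*"
  by (simp add: comp_of_def)

lemma comp_of_self: "x \<in> Vs \<Longrightarrow> x \<in> comp_of Vs f Es x"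
  by (simp add: mem_comp_of)

lemma comp_of_mono: "Es \<subseteq> Es' \<Longrightarrow> comp_of Vs f Es x \<subseteq> comp_of Vs f Es' x"
  by (auto simp: mem_comp_of dest: rtrancl_adj_mono)

lemma comp_of_eq: "y \<in> comp_of Vs f Es x \<Longrightarrow> comp_of Vs f Es y = comp_of Vs f Es x"
  by (auto simp: mem_comp_of) (meson rtrancl_adj_sym rtrancl_trans)+

lemma comp_of_disjoint:
  "y \<in> Vs \<Longrightarrow> y \<notin> comp_of Vs f Es x \<Longrightarrow> comp_of Vs f Es x \<inter> comp_of Vs f Es y = {}"
  by (auto simp: mem_comp_of) (meson rtrancl_adj_sym rtrancl_trans)

lemma spanning_tree_remove_edge_disconnects:
  assumes tree: "spanning_tree Vs f Es T" and e: "e \<in> T" "f e = {a, b}"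
  shows "(a, b) \<notin> (adj f (T - {e}))\<^sup>*"
proof
  assume ab: "(a, b) \<in> (adj f (T - {e}))\<^sup>*"
  have "adj f T \<subseteq> (adj f (T - {e}))\<^sup>*"
  proof
    fix p assume "p \<in> adj f T"
    then obtain u v e' where p: "p = (u, v)" "e' \<in> T" "f e' = {u, v}"
      by (auto simp: adj_def)
    show "p \<in> (adj f (T - {e}))\<^sup>*"
    proof (cases "e' = e")
      case True
      then have "{u, v} = {a, b}" using p e by simp
      then show ?thesis using p ab rtrancl_adj_sym[OF ab] by (auto simp: doubleton_eq_iff)
    qed (use p in \<open>auto simp: adj_def\<close>)
  qed
  then have "(adj f T)\<^sup>* \<subseteq> (adj f (T - {e}))\<^sup>*"
    by (metis rtrancl_subset_rtrancl)
  then have "connected_graph Vs f (T - {e})"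
    using tree by (auto simp: spanning_tree_def connected_graph_def)
  moreover have "T - {e} \<subset> T" using e by blast
  ultimately show False using tree by (simp add: spanning_tree_def)
qed

definition bichromatic_edges :: "('e \<Rightarrow> 'v set) \<Rightarrow> 'e set \<Rightarrow> ('v \<Rightarrow> 'b) \<Rightarrow> 'e set" where
  "bichromatic_edges ends Es P = {e \<in> Es. \<exists>u v. ends e = {u, v} \<and> P u \<noteq> P v}"

lemma label_eq_if_no_bichromatic_edges:
  assumes "bichromatic_edges ends Es P = {}" and "(x, y) \<in> (adj ends Es)\<^sup>*"
  shows "P x = P y"
  using assms(2)
proof (induction rule: rtrancl_induct)
  case (step y z)
  then obtain e where "e \<in> Es" "ends e = {y, z}" by (auto simp: adj_def)
  with assms(1) step.IH show ?case by (auto simp: bichromatic_edges_def)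
qed simp

text \<open>Relabelling the class of one endpoint of a bichromatic edge with the label of the other
  endpoint removes one label and at least that edge from the bichromatic edges.\<close>

lemma card_image_le_card_bichromatic_edges:
  assumes finite: "finite Vs" "finite Es" and ends: "\<forall>e\<in>Es. ends e \<subseteq> Vs"
    and conn: "connected_graph Vs ends Es"
  shows "card (P ` Vs) \<le> card (bichromatic_edges ends Es P) + 1"
proof (induction "card (bichromatic_edges ends Es P)" arbitrary: P rule: less_induct)
  case less
  show ?case
  proof (cases "bichromatic_edges ends Es P = {}")
    case True
    then have "card (P ` Vs) \<le> 1"
      using conn finite(1) label_eq_if_no_bichromatic_edges[of ends Es P]
      by (auto simp: card_le_Suc0_iff_eq connected_graph_def)
    then show ?thesis by simp
  next
    case False
    then obtain e x y where e: "e \<in> bichromatic_edges ends Es P" "ends e = {x, y}" "P x \<noteq> P y"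
      unfolding bichromatic_edges_def by blast
    then have xy: "x \<in> Vs" "y \<in> Vs" using ends by (auto simp: bichromatic_edges_def)
    define P' where "P' v = (if P v = P y then P x else P v)" for v
    have fewer: "bichromatic_edges ends Es P' \<subseteq> bichromatic_edges ends Es P - {e}"
    proof
      fix e' assume "e' \<in> bichromatic_edges ends Es P'"
      then obtain u v where uv: "e' \<in> Es" "ends e' = {u, v}" "P' u \<noteq> P' v"
        by (auto simp: bichromatic_edges_def)
      then have "P u \<noteq> P v" unfolding P'_def by metis
      moreover have "e' \<noteq> e"
      proof
        assume "e' = e"
        then have "{u, v} = {x, y}" using uv e(2) by simp
        moreover have "P' x = P' y" by (simp add: P'_def)
        ultimately show False using uv(3) by (auto simp: doubleton_eq_iff)
      qed
      ultimately show "e' \<in> bichromatic_edges ends Es P - {e}"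
        using uv by (auto simp: bichromatic_edges_def)
    qed
    have "finite (bichromatic_edges ends Es P)"
      using finite(2) by (simp add: bichromatic_edges_def)
    then have "card (bichromatic_edges ends Es P') < card (bichromatic_edges ends Es P)"
      using card_mono[OF finite_Diff fewer] card_Diff1_less e(1) by (meson le_less_trans)
    moreover have "P' ` Vs = P ` Vs - {P y}"
      using xy e(3) by (auto simp: P'_def)
    ultimately show ?thesis
      using less.hyps[of P'] xy finite(1) by (simp add: card_Diff_singleton)
  qed
qed

definition index_signature :: "(nat \<Rightarrow> 'a set) \<Rightarrow> nat set \<Rightarrow> 'a \<Rightarrow> nat set" where
  "index_signature X \<A> C = {i \<in> \<A>. C \<in> X i}"

text \<open>Abstracts the merge order of the contracted MST: ep i is the edge e'_i, and X i the side
  of e'_i selected at step i, i.e. the component of one endpoint in the forest of the earlier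
  edges that does not contain the other endpoint.\<close>

locale merge_sequence =
  fixes W :: "'a set" and endc :: "'e \<Rightarrow> 'a set" and ep :: "nat \<Rightarrow> 'e" and t :: nat
    and X :: "nat \<Rightarrow> 'a set"
  assumes merge_step: "i \<in> {1..<t} \<Longrightarrow> \<exists>x\<in>W. \<exists>y\<in>W. endc (ep i) = {x, y} \<and>
      X i = comp_of W endc (ep ` {1..<i}) x \<and> y \<notin> X i"
begin

abbreviation forest_comp :: "nat \<Rightarrow> 'a \<Rightarrow> 'a set" where
  "forest_comp n x \<equiv> comp_of W endc (ep ` {1..<n}) x"

lemma merge_stepE:
  assumes "i \<in> {1..<t}"
  obtains x y where "x \<in> W" "y \<in> W" "endc (ep i) = {x, y}" "X i = forest_comp i x"
    "X i \<inter> forest_comp i y = {}"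
  using merge_step[OF assms] comp_of_disjoint by metis

lemma selected_subset: "i \<in> {1..<t} \<Longrightarrow> X i \<subseteq> W"
  by (metis merge_stepE mem_comp_of subsetI)

lemma forest_comp_Suc: "forest_comp n x \<subseteq> forest_comp (Suc n) x"
  by (rule comp_of_mono) auto

lemma exists_unselected_in_forest_comp:
  "n < t \<Longrightarrow> a \<in> W \<Longrightarrow> \<exists>A\<in>forest_comp (Suc n) a. \<forall>i\<in>{1..n}. A \<notin> X i"
proof (induction n arbitrary: a)
  case 0
  then show ?case by (auto intro: comp_of_self)
next
  case (Suc n)
  let ?j = "Suc n"
  obtain x y where xy: "x \<in> W" "y \<in> W" "endc (ep ?j) = {x, y}" "X ?j = forest_comp ?j x"
      "X ?j \<inter> forest_comp ?j y = {}"
    using merge_stepE[of ?j] Suc.prems by auto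
  obtain A where A: "A \<in> forest_comp ?j a" "\<forall>i\<in>{1..n}. A \<notin> X i"
    using Suc.IH Suc.prems by auto
  obtain B where B: "B \<in> forest_comp ?j y" "\<forall>i\<in>{1..n}. B \<notin> X i"
    using Suc.IH xy(2) Suc.prems by auto
  show ?case
  proof (cases "A \<in> X ?j")
    case False
    then have "\<forall>i\<in>{1..?j}. A \<notin> X i" using A(2) by (metis atLeastAtMost_iff le_Suc_eq)
    then show ?thesis using A(1) forest_comp_Suc by blast
  next
    case True
    \<comment> \<open>the edge ep ?j joins the component of a (which meets X ?j) to the one of y\<close>
    have "forest_comp (Suc ?j) a = forest_comp (Suc ?j) A"
      using A(1) forest_comp_Suc comp_of_eq by (metis subsetD)
    also have "\<dots> = forest_comp (Suc ?j) x"
      using True xy(4) forest_comp_Suc comp_of_eq by (metis subsetD)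
    also have "\<dots> = forest_comp (Suc ?j) y"
    proof -
      have "y \<in> forest_comp (Suc ?j) x"
        using xy(2,3) edge_in_rtrancl_adj[of "ep ?j" "ep ` {1..<Suc ?j}"]
        by (auto simp: mem_comp_of)
      then show ?thesis by (rule comp_of_eq[symmetric])
    qed
    finally have "B \<in> forest_comp (Suc ?j) a"
      using B(1) forest_comp_Suc by blast
    moreover have "B \<notin> X ?j" using B(1) xy(5) by blast
    ultimately show ?thesis using B(2) by (metis atLeastAtMost_iff le_Suc_eq)
  qed
qed

lemma card_index_signature_gt:
  assumes "finite W" "W \<noteq> {}" "\<A> \<subseteq> {1..<t}"
  shows "card \<A> < card (index_signature X \<A> ` W)"
proof -
  have "finite \<A>" using assms(3) finite_subset by blast
  then show ?thesis
    using assms(3)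
  proof (induction \<A> rule: finite_linorder_max_induct)
    case empty
    then have "index_signature X {} ` W = {{}}"
      using assms(2) by (auto simp: index_signature_def)
    then show ?case by simp
  next
    case (insert m \<A>)
    then have m: "m \<in> {1..<t}" and IH: "card \<A> < card (index_signature X \<A> ` W)"
      by auto
    obtain x y where xy: "x \<in> W" "y \<in> W" "X m = forest_comp m x" "X m \<inter> forest_comp m y = {}"
      using merge_stepE[OF m] by metis
    have m_Suc: "Suc (m - 1) = m" "m - 1 < t" using m by auto
    obtain a where a: "a \<in> X m" "\<forall>i\<in>{1..m - 1}. a \<notin> X i"
      using exists_unselected_in_forest_comp[OF m_Suc(2) xy(1)] xy(3) m_Suc(1) by metis
    obtain b where b: "b \<in> forest_comp m y" "\<forall>i\<in>{1..m - 1}. b \<notin> X i"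
      using exists_unselected_in_forest_comp[OF m_Suc(2) xy(2)] m_Suc(1) by metis
    have "a \<in> W" "b \<in> W" using a(1) b(1) xy(3) by (auto simp: mem_comp_of)
    have "index_signature X (insert m \<A>) a = {m}"
      using a insert.hyps(2) insert.prems by (fastforce simp: index_signature_def)
    moreover have "index_signature X (insert m \<A>) b = {}"
      using b xy(4) insert.hyps(2) insert.prems by (fastforce simp: index_signature_def)
    ultimately have not_inj: "\<not> inj_on (\<lambda>S. S - {m}) (index_signature X (insert m \<A>) ` W)"
      using \<open>a \<in> W\<close> \<open>b \<in> W\<close> unfolding inj_on_def
      by (metis Diff_cancel empty_Diff image_eqI insert_not_empty)
    have "index_signature X \<A> ` W = (\<lambda>S. S - {m}) ` index_signature X (insert m \<A>) ` W"
      using insert.hyps(2) by (auto simp: index_signature_def image_image)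
    then have "card (index_signature X \<A> ` W) < card (index_signature X (insert m \<A>) ` W)"
      using not_inj card_image_le[of _ "\<lambda>S. S - {m}"] inj_on_iff_eq_card assms(1)
      by (metis finite_imageI order_le_neq_trans)
    moreover have "m \<notin> \<A>" using insert.hyps(2) by blast
    ultimately show ?case
      using IH insert.hyps(1) by simp
  qed
qed

end

lemma card_index_signature_le_card_crossing_edges:
  fixes V :: "'v set" and ends :: "'e \<Rightarrow> 'v set" and T F :: "'e set"
    and X :: "nat \<Rightarrow> 'v set set"
  defines "cmp \<equiv> comp_of V ends (T - F)"
  assumes finite: "finite V" "finite T" and ends: "\<forall>e\<in>T. ends e \<subseteq> V"
    and conn: "connected_graph V ends T" and X: "\<forall>i\<in>\<A>. X i \<subseteq> cmp ` V"
  shows "card (index_signature X \<A> ` cmp ` V)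
           \<le> card {e \<in> F \<inter> T. \<exists>i\<in>\<A>. crosses ends (\<Union> (X i)) e} + 1"
proof -
  let ?P = "index_signature X \<A> \<circ> cmp"
  have mem_Union_iff: "v \<in> \<Union> (X i) \<longleftrightarrow> cmp v \<in> X i" if "v \<in> V" "i \<in> \<A>" for v i
    using that X comp_of_eq comp_of_self unfolding cmp_def by fastforce
  have "bichromatic_edges ends T ?P \<subseteq> {e \<in> F \<inter> T. \<exists>i\<in>\<A>. crosses ends (\<Union> (X i)) e}"
  proof
    fix e assume "e \<in> bichromatic_edges ends T ?P"
    then obtain u v where e: "e \<in> T" "ends e = {u, v}" "?P u \<noteq> ?P v"
      unfolding bichromatic_edges_def by blast
    then have uv: "u \<in> V" "v \<in> V" "u \<noteq> v" using ends by auto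
    obtain i where i: "i \<in> \<A>" "cmp u \<in> X i \<longleftrightarrow> cmp v \<notin> X i"
      using e(3) by (auto simp: index_signature_def)
    have "card (ends e \<inter> \<Union> (X i)) = 1"
      using e(2) uv i mem_Union_iff by (cases "u \<in> \<Union> (X i)") auto
    moreover have "e \<in> F"
    proof (rule ccontr)
      assume "e \<notin> F"
      then have "v \<in> cmp u"
        using e(1,2) uv edge_in_rtrancl_adj[of e "T - F" ends u v]
        by (simp add: cmp_def mem_comp_of)
      then show False using e(3) comp_of_eq unfolding cmp_def by fastforce
    qed
    ultimately show "e \<in> {e \<in> F \<inter> T. \<exists>i\<in>\<A>. crosses ends (\<Union> (X i)) e}"
      using e(1) i(1) by (auto simp: crosses_def)
  qed
  then have "card (bichromatic_edges ends T ?P)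
               \<le> card {e \<in> F \<inter> T. \<exists>i\<in>\<A>. crosses ends (\<Union> (X i)) e}"
    using finite(2) by (intro card_mono) auto
  moreover have "card (?P ` V) \<le> card (bichromatic_edges ends T ?P) + 1"
    using card_image_le_card_bichromatic_edges[OF finite ends conn] .
  ultimately show ?thesis by (simp add: image_comp)
qed

lemma merge_sequence_Xsel:
  assumes tree: "spanning_tree W endc Es Tr" and bij: "bij_betw ep {1..<t} Tr"
    and endc: "\<forall>e\<in>Es. endc e \<subseteq> W"
    and LR: "\<forall>i\<in>{1..<t}. \<exists>a b. endc (ep i) = {a, b} \<and>
               L i = comp_of W endc (ep ` {1..<i}) a \<and> R i = comp_of W endc (ep ` {1..<i}) b"
  shows "merge_sequence W endc ep t (Xsel L R)"
proof
  fix i assume i: "i \<in> {1..<t}"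
  then obtain a b where ab: "endc (ep i) = {a, b}" "L i = comp_of W endc (ep ` {1..<i}) a"
      "R i = comp_of W endc (ep ` {1..<i}) b"
    using LR by blast
  have "ep i \<in> Tr" using bij_betwE[OF bij] i by blast
  moreover have "Tr \<subseteq> Es" using tree by (simp add: spanning_tree_def)
  ultimately have "a \<in> W" "b \<in> W" using endc ab(1) by auto
  have "ep ` {1..<i} \<subseteq> Tr - {ep i}"
  proof
    fix e assume "e \<in> ep ` {1..<i}"
    then obtain j where j: "j \<in> {1..<i}" "e = ep j" by blast
    then have "j \<in> {1..<t}" "j \<noteq> i" using i by auto
    moreover have "ep j \<noteq> ep i"
      using inj_onD[OF bij_betw_imp_inj_on[OF bij]] \<open>j \<in> {1..<t}\<close> \<open>j \<noteq> i\<close> i by blast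
    ultimately show "e \<in> Tr - {ep i}"
      using bij_betwE[OF bij] j(2) by auto
  qed
  then have "(a, b) \<notin> (adj endc (ep ` {1..<i}))\<^sup>*"
    using spanning_tree_remove_edge_disconnects[OF tree \<open>ep i \<in> Tr\<close> ab(1)]
      rtrancl_adj_mono[of "ep ` {1..<i}" "Tr - {ep i}" a b endc] by blast
  then have "b \<notin> L i" "a \<notin> R i"
    using ab(2,3) rtrancl_adj_sym[of b a] by (auto simp: mem_comp_of)
  moreover have "Xsel L R i = L i \<or> Xsel L R i = R i"
    by (simp add: Xsel_def)
  ultimately show "\<exists>x\<in>W. \<exists>y\<in>W. endc (ep i) = {x, y} \<and>
      Xsel L R i = comp_of W endc (ep ` {1..<i}) x \<and> y \<notin> Xsel L R i"
    using ab \<open>a \<in> W\<close> \<open>b \<in> W\<close> by (metis insert_commute)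
qed

theorem mainTheorem12:
  fixes V :: "'v set" and E :: "'e set" and ends :: "'e \<Rightarrow> 'v set"
    and w :: "'e \<Rightarrow> real" and c :: "'e \<Rightarrow> real"
    and F T Tcc :: "'e set" and ep :: "nat \<Rightarrow> 'e"
    and L R :: "nat \<Rightarrow> 'v set set"
  assumes finV: "finite V" and finE: "finite E"
    and ends_ok: "\<forall>e\<in>E. ends e \<subseteq> V \<and> card (ends e) = 2"
    and connG: "connected_graph V ends E"
    and w_nonneg: "\<forall>e\<in>E. 0 \<le> w e" and c_pos: "\<forall>e\<in>E. 0 < c e"
    and FE: "F \<subseteq> E"
    and connG': "connected_graph V ends (E - F)"
    and T_MST: "is_MST V ends E w T"
    and t_ge2: "2 \<le> card {comp_of V ends (T - F) v | v. v \<in> V}"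
    and Tcc_MST: "is_MST {comp_of V ends (T - F) v | v. v \<in> V}
                    (\<lambda>e. comp_of V ends (T - F) ` ends e) (E - F) w Tcc"
    and ep_bij: "bij_betw ep {1..<card {comp_of V ends (T - F) v | v. v \<in> V}} Tcc"
    and ep_sorted: "\<forall>i j. 1 \<le> i \<and> i \<le> j \<and> j < card {comp_of V ends (T - F) v | v. v \<in> V}
                      \<longrightarrow> w (ep i) \<le> w (ep j)"
    and LR: "\<forall>i\<in>{1..<card {comp_of V ends (T - F) v | v. v \<in> V}}. \<exists>a b.
               comp_of V ends (T - F) ` ends (ep i) = {a, b} \<and>
               L i = comp_of {comp_of V ends (T - F) v | v. v \<in> V}
                       (\<lambda>e. comp_of V ends (T - F) ` ends e) (ep ` {1..<i}) a \<and>
               R i = comp_of {comp_of V ends (T - F) v | v. v \<in> V}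
                       (\<lambda>e. comp_of V ends (T - F) ` ends e) (ep ` {1..<i}) b"
  shows "\<forall>k\<in>{1..card {comp_of V ends (T - F) v | v. v \<in> V} - 1}. \<forall>\<A>.
           \<A> \<subseteq> {1..<card {comp_of V ends (T - F) v | v. v \<in> V}} \<and> card \<A> = k \<longrightarrow>
           k \<le> card {e \<in> F \<inter> T. \<exists>i\<in>\<A>. crosses ends (\<Union> (Xsel L R i)) e}"
proof (intro ballI allI impI, elim conjE)
  fix k \<A>
  let ?cmp = "comp_of V ends (T - F)"
  let ?W = "{?cmp v | v. v \<in> V}"
  assume \<A>: "\<A> \<subseteq> {1..<card ?W}" and k: "card \<A> = k"
  have W: "?W = ?cmp ` V" by blast
  have T: "T \<subseteq> E" "connected_graph V ends T"
    using T_MST by (auto simp: is_MST_def spanning_tree_def)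
  have "merge_sequence ?W (\<lambda>e. ?cmp ` ends e) ep (card ?W) (Xsel L R)"
  proof (rule merge_sequence_Xsel[OF _ ep_bij _ LR])
    show "spanning_tree ?W (\<lambda>e. ?cmp ` ends e) (E - F) Tcc"
      using Tcc_MST by (simp add: is_MST_def)
    show "\<forall>e\<in>E - F. ?cmp ` ends e \<subseteq> ?W"
      using ends_ok unfolding W by blast
  qed
  then interpret merge_sequence ?W "\<lambda>e. ?cmp ` ends e" ep "card ?W" "Xsel L R" .
  have "card \<A> < card (index_signature (Xsel L R) \<A> ` ?W)"
  proof (rule card_index_signature_gt[OF _ _ \<A>])
    show "finite ?W" unfolding W using finV by simp
    show "?W \<noteq> {}" using t_ge2 by (metis card.empty not_numeral_le_zero)
  qed
  also have "\<dots> \<le> card {e \<in> F \<inter> T. \<exists>i\<in>\<A>. crosses ends (\<Union> (Xsel L R i)) e} + 1"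
    unfolding W
  proof (rule card_index_signature_le_card_crossing_edges[OF finV _ _ T(2)])
    show "finite T" using T(1) finE by (rule finite_subset)
    show "\<forall>e\<in>T. ends e \<subseteq> V" using T(1) ends_ok by blast
    show "\<forall>i\<in>\<A>. Xsel L R i \<subseteq> ?cmp ` V" using selected_subset \<A> W by blast
  qed
  finally show "k \<le> card {e \<in> F \<inter> T. \<exists>i\<in>\<A>. crosses ends (\<Union> (Xsel L R i)) e}"
    using k by simp
qed

end
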